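(* Let $R$ be a finitely stable domain that does not have finite character, let $x\in R$ be nonzero and let $\{I_\alpha\}$ be an infinite family of pairwise comaximal finitely generated ideals of $R$ each containing $x$. Set $E_\alpha=(I_\alpha:I_\alpha)$ and $E=\sum_\alpha E_\alpha$. Then $E$ is a fractional overring of $R$, and $\{I_\alpha E\}$ is an infinite family of pairwise comaximal proper invertible ideals of $E$, each containing $x$.
   Context: Let $R$ be an integral domain with quotient field $K\neq R$. For a nonzero ideal $I$, $(I:I)=\{y\in K: yI\subseteq I\}$. An overring of $R$ is a domain $D$ with $R\subseteq D\subseteq K$; it is fractional if $dD\subseteq R$ for some nonzero $d\in R$. A nonzero ideal $I$ is stable if it is invertible as an ideal of $(I:I)$; $R$ is finitely stable if every nonzero finitely generated ideal is stable. $R$ has finite character if every nonzero element of $R$ lies in only finitely many maximal ideals. Ideals $A,B$ of a ring $S$ are comaximal if $A+B=S$. *)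

theory Defs
  imports Main
begin

text \<open>Conventions: the quotient field K of R is the ambient field type 'k;
  R, its overrings and (fractional) ideals are subsets of 'k.\<close>

definition subring :: "'k::field set \<Rightarrow> bool" where
  "subring S \<longleftrightarrow> 0 \<in> S \<and> 1 \<in> S \<and> (\<forall>a\<in>S. \<forall>b\<in>S. a + b \<in> S \<and> a * b \<in> S \<and> - a \<in> S)"

definition has_quotient_field :: "'k::field set \<Rightarrow> bool" where
  "has_quotient_field R \<longleftrightarrow> subring R \<and>
     (\<forall>z::'k. \<exists>a\<in>R. \<exists>b\<in>R. b \<noteq> 0 \<and> z = a / b)"

definition is_ideal :: "'k::field set \<Rightarrow> 'k set \<Rightarrow> bool" where
  "is_ideal S I \<longleftrightarrow> I \<subseteq> S \<and> 0 \<in> I \<and> (\<forall>a\<in>I. \<forall>b\<in>I. a + b \<in> I) \<and>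
     (\<forall>s\<in>S. \<forall>a\<in>I. s * a \<in> I)"

definition fset_mult :: "'k::field set \<Rightarrow> 'k set \<Rightarrow> 'k set" where
  "fset_mult A B = {y. \<exists>(n::nat) f g. (\<forall>i<n. f i \<in> A \<and> g i \<in> B) \<and> y = (\<Sum>i<n. f i * g i)}"

definition fin_gen :: "'k::field set \<Rightarrow> 'k set \<Rightarrow> bool" where
  "fin_gen S I \<longleftrightarrow> (\<exists>G. finite G \<and> G \<subseteq> S \<and> I = fset_mult S G)"

definition colon :: "'k::field set \<Rightarrow> 'k set \<Rightarrow> 'k set" where
  "colon I J = {y. \<forall>j\<in>J. y * j \<in> I}"

definition invertible_ideal :: "'k::field set \<Rightarrow> 'k set \<Rightarrow> bool" where
  "invertible_ideal S J \<longleftrightarrow> is_ideal S J \<and> fset_mult J (colon S J) = S"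

definition stable_ideal :: "'k::field set \<Rightarrow> 'k set \<Rightarrow> bool" where
  "stable_ideal R I \<longleftrightarrow> is_ideal R I \<and> I \<noteq> {0} \<and> invertible_ideal (colon I I) I"

definition finitely_stable :: "'k::field set \<Rightarrow> bool" where
  "finitely_stable R \<longleftrightarrow> (\<forall>I. is_ideal R I \<and> I \<noteq> {0} \<and> fin_gen R I \<longrightarrow> stable_ideal R I)"

definition maximal_ideal :: "'k::field set \<Rightarrow> 'k set \<Rightarrow> bool" where
  "maximal_ideal R M \<longleftrightarrow> is_ideal R M \<and> M \<noteq> R \<and>
     (\<forall>J. is_ideal R J \<and> M \<subseteq> J \<and> J \<noteq> R \<longrightarrow> J = M)"

definition finite_character :: "'k::field set \<Rightarrow> bool" where
  "finite_character R \<longleftrightarrow> (\<forall>r\<in>R. r \<noteq> 0 \<longrightarrow> finite {M. maximal_ideal R M \<and> r \<in> M})"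

definition comaximal :: "'k::field set \<Rightarrow> 'k set \<Rightarrow> 'k set \<Rightarrow> bool" where
  "comaximal S A B \<longleftrightarrow> {a + b |a b. a \<in> A \<and> b \<in> B} = S"

definition overring :: "'k::field set \<Rightarrow> 'k set \<Rightarrow> bool" where
  "overring R D \<longleftrightarrow> subring D \<and> R \<subseteq> D"

definition fractional_overring :: "'k::field set \<Rightarrow> 'k set \<Rightarrow> bool" where
  "fractional_overring R D \<longleftrightarrow> overring R D \<and> (\<exists>d\<in>R. d \<noteq> 0 \<and> (\<forall>y\<in>D. d * y \<in> R))"

definition family_sum :: "'a set \<Rightarrow> ('a \<Rightarrow> 'k::field set) \<Rightarrow> 'k set" where
  "family_sum A E = {y. \<exists>F e. finite F \<and> F \<subseteq> A \<and> (\<forall>a\<in>F. e a \<in> E a) \<and> y = (\<Sum>a\<in>F. e a)}"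

end

theory Submission
  imports Defs
begin

text \<open>
  The proof rests on three observations.
  (1) E is a ring: for \<alpha> \<noteq> \<beta> choose p + q = 1 with p \<in> I_\<alpha>, q \<in> I_\<beta>; then for e \<in> E_\<alpha>,
      f \<in> E_\<beta> we get e f = e (f q) + (e p) f \<in> E_\<alpha> + E_\<beta>.  A common nonzero x \<in> \<Inter> I_\<alpha> clears
      all denominators, since x E_\<alpha> \<subseteq> I_\<alpha> \<subseteq> R; so E is a fractional overring.
  (2) Extension of ideals along R \<subseteq> E preserves comaximality, and extension along
      E_\<alpha> \<subseteq> E preserves invertibility; finite stability makes I_\<alpha> invertible in E_\<alpha>.
  (3) I_\<alpha> E stays proper: every element of E is moved into E_\<alpha> by a multiplier c \<equiv> 1
      mod I_\<alpha> (for summands from E_\<beta>, \<beta> \<noteq> \<alpha>, take c = q above), so every element of I_\<alpha> E is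
      moved into I_\<alpha>; applied to 1 this would put 1 into I_\<alpha>.
  Comaximal proper ideals are distinct, so the family of extensions is again infinite.
\<close>

lemma fset_mult_induct:
  assumes "(0::'k::field) \<in> T" "\<And>u v. u \<in> T \<Longrightarrow> v \<in> T \<Longrightarrow> u + v \<in> T"
    and "\<And>a b. a \<in> A \<Longrightarrow> b \<in> B \<Longrightarrow> a * b \<in> T"
  shows "fset_mult A B \<subseteq> T"
proof
  fix y assume "y \<in> fset_mult A B"
  then obtain n f g where fg: "\<forall>i<(n::nat). f i \<in> A \<and> g i \<in> B" and y: "y = (\<Sum>i<n. f i * g i)"
    unfolding fset_mult_def by blast
  have "(\<forall>i<m. f i \<in> A \<and> g i \<in> B) \<longrightarrow> (\<Sum>i<m. f i * g i) \<in> T" for m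
    by (induction m) (auto simp: assms)
  with fg y show "y \<in> T" by blast
qed

lemma fset_mult_zero: "(0::'k::field) \<in> fset_mult A B"
  unfolding fset_mult_def by (intro CollectI exI[of _ 0]) simp

lemma fset_mult_prod: "a \<in> A \<Longrightarrow> b \<in> B \<Longrightarrow> (a::'k::field) * b \<in> fset_mult A B"
  unfolding fset_mult_def by (intro CollectI exI[of _ 1] exI[of _ "\<lambda>_. a"] exI[of _ "\<lambda>_. b"]) simp

lemma sum_lessThan_add_split:
  "(\<Sum>i<n + m. h i) = (\<Sum>i<n. h i) + (\<Sum>i<m. h (n + i))" for h :: "nat \<Rightarrow> 'a::comm_monoid_add"
  by (induction m) (simp_all add: add.assoc)

lemma fset_mult_add:
  assumes "y \<in> fset_mult A B" "z \<in> fset_mult A B"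
  shows "y + (z::'k::field) \<in> fset_mult A B"
proof -
  obtain n f g where fg: "\<forall>i<(n::nat). f i \<in> A \<and> g i \<in> B" and y: "y = (\<Sum>i<n. f i * g i)"
    using assms(1) unfolding fset_mult_def by blast
  obtain m f' g' where fg': "\<forall>i<(m::nat). f' i \<in> A \<and> g' i \<in> B" and z: "z = (\<Sum>i<m. f' i * g' i)"
    using assms(2) unfolding fset_mult_def by blast
  define F where "F i = (if i < n then f i else f' (i - n))" for i
  define G where "G i = (if i < n then g i else g' (i - n))" for i
  have "(\<Sum>i<n + m. F i * G i) = y + z"
    unfolding sum_lessThan_add_split y z F_def G_def by simp
  moreover have "\<forall>i<n + m. F i \<in> A \<and> G i \<in> B"
    using fg fg' by (simp add: F_def G_def)
  ultimately show ?thesis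
    unfolding fset_mult_def by (intro CollectI exI[of _ "n + m"] exI[of _ F] exI[of _ G]) simp
qed

lemma family_sum_induct:
  fixes E :: "'a \<Rightarrow> 'k::field set"
  assumes "0 \<in> T" "\<And>u v. u \<in> T \<Longrightarrow> v \<in> T \<Longrightarrow> u + v \<in> T" "\<And>a. a \<in> A \<Longrightarrow> E a \<subseteq> T"
  shows "family_sum A E \<subseteq> T"
proof
  fix y assume "y \<in> family_sum A E"
  then obtain F e where F: "finite F" "F \<subseteq> A" "\<forall>a\<in>F. e a \<in> E a" and y: "y = (\<Sum>a\<in>F. e a)"
    unfolding family_sum_def by blast
  have "F \<subseteq> A \<longrightarrow> (\<forall>a\<in>F. e a \<in> E a) \<longrightarrow> (\<Sum>a\<in>F. e a) \<in> T"
    using F(1) by (induction F rule: finite_induct) (auto simp: assms(1,2) dest!: assms(3))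
  with F y show "y \<in> T" by blast
qed

lemma family_sum_zero: "(0::'k::field) \<in> family_sum A E"
  unfolding family_sum_def by (intro CollectI exI[of _ "{}"]) simp

lemma family_sum_mem: "a \<in> A \<Longrightarrow> u \<in> E a \<Longrightarrow> (u::'k::field) \<in> family_sum A E"
  unfolding family_sum_def by (intro CollectI exI[of _ "{a}"] exI[of _ "\<lambda>_. u"]) simp

lemma family_sum_add:
  fixes E :: "'a \<Rightarrow> 'k::field set"
  assumes "y \<in> family_sum A E" "z \<in> family_sum A E"
    and zero: "\<And>a. a \<in> A \<Longrightarrow> 0 \<in> E a"
    and add: "\<And>a u v. a \<in> A \<Longrightarrow> u \<in> E a \<Longrightarrow> v \<in> E a \<Longrightarrow> u + v \<in> E a"
  shows "y + z \<in> family_sum A E"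
proof -
  obtain F e where F: "finite F" "F \<subseteq> A" "\<forall>a\<in>F. e a \<in> E a" "y = (\<Sum>a\<in>F. e a)"
    using assms(1) unfolding family_sum_def by blast
  obtain G e' where G: "finite G" "G \<subseteq> A" "\<forall>a\<in>G. e' a \<in> E a" "z = (\<Sum>a\<in>G. e' a)"
    using assms(2) unfolding family_sum_def by blast
  define d where "d a = (if a \<in> F then e a else 0) + (if a \<in> G then e' a else 0)" for a
  have "(\<Sum>a\<in>F \<union> G. d a) = y + z"
    using F G by (simp add: d_def sum.distrib sum.If_cases Int_absorb1 Int_absorb2)
  moreover have "\<forall>a\<in>F \<union> G. d a \<in> E a"
    using F G by (auto simp: d_def intro!: add zero)
  ultimately show ?thesis
    using F G unfolding family_sum_def by (intro CollectI exI[of _ "F \<union> G"] exI[of _ d]) auto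
qed

lemma family_sum_mult:
  fixes E :: "'a \<Rightarrow> 'k::field set"
  assumes zero: "\<And>a. a \<in> A \<Longrightarrow> 0 \<in> E a"
    and add: "\<And>a u v. a \<in> A \<Longrightarrow> u \<in> E a \<Longrightarrow> v \<in> E a \<Longrightarrow> u + v \<in> E a"
    and cross: "\<And>a b e f. a \<in> A \<Longrightarrow> b \<in> A \<Longrightarrow> e \<in> E a \<Longrightarrow> f \<in> E b \<Longrightarrow> e * f \<in> family_sum A E"
    and "u \<in> family_sum A E" "v \<in> family_sum A E"
  shows "u * v \<in> family_sum A E"
proof -
  let ?S = "family_sum A E"
  have sum_add: "u + v \<in> ?S" if "u \<in> ?S" "v \<in> ?S" for u v
    using family_sum_add[OF that zero add] by blast
  have mult_right: "?S \<subseteq> {u. u * f \<in> ?S}" if "b \<in> A" "f \<in> E b" for b f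
  proof (rule family_sum_induct)
    show "0 \<in> {u. u * f \<in> ?S}" by (simp add: family_sum_zero)
    show "u + v \<in> {u. u * f \<in> ?S}" if "u \<in> {u. u * f \<in> ?S}" "v \<in> {u. u * f \<in> ?S}" for u v
      using sum_add[of "u * f" "v * f"] that by (simp add: distrib_right)
    show "E a \<subseteq> {u. u * f \<in> ?S}" if "a \<in> A" for a
      using cross[OF that \<open>b \<in> A\<close> _ \<open>f \<in> E b\<close>] by blast
  qed
  have "?S \<subseteq> {v. \<forall>u\<in>?S. u * v \<in> ?S}"
  proof (rule family_sum_induct)
    show "0 \<in> {v. \<forall>u\<in>?S. u * v \<in> ?S}" by (simp add: family_sum_zero)
    show "v + w \<in> {v. \<forall>u\<in>?S. u * v \<in> ?S}"
      if "v \<in> {v. \<forall>u\<in>?S. u * v \<in> ?S}" "w \<in> {v. \<forall>u\<in>?S. u * v \<in> ?S}" for v w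
      using that sum_add by (simp add: distrib_left)
    show "E b \<subseteq> {v. \<forall>u\<in>?S. u * v \<in> ?S}" if "b \<in> A" for b
      using mult_right[OF that] by blast
  qed
  with assms(4,5) show ?thesis by blast
qed

lemma subringD:
  assumes "subring S"
  shows "0 \<in> S" "1 \<in> S" "a \<in> S \<Longrightarrow> b \<in> S \<Longrightarrow> a + b \<in> S"
    "a \<in> S \<Longrightarrow> b \<in> S \<Longrightarrow> a * b \<in> S" "a \<in> S \<Longrightarrow> - a \<in> S"
  using assms unfolding subring_def by auto

lemma is_idealD:
  assumes "is_ideal S I"
  shows "I \<subseteq> S" "0 \<in> I" "a \<in> I \<Longrightarrow> b \<in> I \<Longrightarrow> a + b \<in> I" "s \<in> S \<Longrightarrow> a \<in> I \<Longrightarrow> s * a \<in> I"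
  using assms unfolding is_ideal_def by auto

lemma ideal_neg:
  assumes S: "subring S" and I: "is_ideal S I" and a: "a \<in> I"
  shows "- a \<in> I"
proof -
  have "- 1 \<in> S" using subringD(2,5)[OF S] by blast
  then show ?thesis using is_idealD(4)[OF I _ a] by fastforce
qed

lemma ideal_one_eq:
  assumes "is_ideal S I" "1 \<in> I"
  shows "I = S"
  using is_idealD(1)[OF assms(1)] is_idealD(4)[OF assms(1) _ assms(2)] by force

lemma ideal_subset_colon_self: "is_ideal R I \<Longrightarrow> R \<subseteq> colon I I"
  unfolding colon_def using is_idealD(4) by blast

lemma colon_self_subring:
  assumes "subring R" "is_ideal R I"
  shows "subring (colon I I)"
proof -
  have "1 \<in> colon I I" "0 \<in> colon I I"
    using ideal_subset_colon_self[OF assms(2)] subringD(1,2)[OF assms(1)] by blast+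
  moreover have "a + b \<in> colon I I" "a * b \<in> colon I I" "- a \<in> colon I I"
    if "a \<in> colon I I" "b \<in> colon I I" for a b
  proof -
    have a: "a * j \<in> I" and b: "b * j \<in> I" if "j \<in> I" for j
      using that \<open>a \<in> colon I I\<close> \<open>b \<in> colon I I\<close> unfolding colon_def by blast+
    show "a + b \<in> colon I I"
      unfolding colon_def using is_idealD(3)[OF assms(2) a b] by (simp add: distrib_right)
    show "a * b \<in> colon I I"
      unfolding colon_def using \<open>a \<in> colon I I\<close> b unfolding colon_def by (simp add: mult.assoc)
    show "- a \<in> colon I I"
      unfolding colon_def using ideal_neg[OF assms a] by simp
  qed
  ultimately show ?thesis unfolding subring_def by (intro conjI ballI) simp_all
qed

lemma comaximal_one:
  assumes "comaximal S I J" "1 \<in> S"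
  obtains p q where "p \<in> I" "q \<in> J" "p + q = 1"
proof -
  have "1 \<in> {a + b |a b. a \<in> I \<and> b \<in> J}" using assms unfolding comaximal_def by simp
  then obtain p q where pq: "p \<in> I" "q \<in> J" "1 = p + q" by blast
  show ?thesis using that[OF pq(1,2) pq(3)[symmetric]] .
qed

lemma comaximal_self:
  assumes "is_ideal S J" "comaximal S J J"
  shows "J = S"
proof -
  have "{a + b |a b. a \<in> J \<and> b \<in> J} \<subseteq> J" using is_idealD(3)[OF assms(1)] by blast
  moreover have "S = {a + b |a b. a \<in> J \<and> b \<in> J}" using assms(2) unfolding comaximal_def by simp
  ultimately show ?thesis using is_idealD(1)[OF assms(1)] by blast
qed

text \<open>For comaximal I and J the product of a multiplier of I and one of J is a sum of
  such multipliers: with p + q = 1 one has e f = e (f q) + (e p) f.\<close>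
lemma colon_product_split:
  assumes R: "subring R" and I: "is_ideal R I" and J: "is_ideal R J" and "comaximal R I J"
    and e: "e \<in> colon I I" and f: "f \<in> colon J J"
  obtains u v where "u \<in> colon I I" "v \<in> colon J J" "e * f = u + v"
proof -
  obtain p q where pq: "p \<in> I" "q \<in> J" "p + q = 1"
    using comaximal_one[OF assms(4) subringD(2)[OF R]] .
  have "e * p \<in> I" using e pq(1) unfolding colon_def by blast
  then have ep: "e * p \<in> colon J J" using is_idealD(1)[OF I] ideal_subset_colon_self[OF J] by blast
  have "f * q \<in> J" using f pq(2) unfolding colon_def by blast
  then have fq: "f * q \<in> colon I I" using is_idealD(1)[OF J] ideal_subset_colon_self[OF I] by blast
  have "e * f = e * f * (p + q)" by (simp add: pq(3))
  also have "\<dots> = e * (f * q) + (e * p) * f" by (simp add: algebra_simps)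
  finally show ?thesis
    by (rule that[OF subringD(4)[OF colon_self_subring[OF R I] e fq]
          subringD(4)[OF colon_self_subring[OF R J] ep f]])
qed

lemma family_sum_subring:
  fixes E :: "'a \<Rightarrow> 'k::field set"
  assumes "A \<noteq> {}" and sub: "\<And>a. a \<in> A \<Longrightarrow> subring (E a)"
    and cross: "\<And>a b e f. a \<in> A \<Longrightarrow> b \<in> A \<Longrightarrow> e \<in> E a \<Longrightarrow> f \<in> E b \<Longrightarrow> e * f \<in> family_sum A E"
  shows "subring (family_sum A E)"
proof -
  let ?S = "family_sum A E"
  note summand_zero = subringD(1)[OF sub] and summand_add = subringD(3)[OF sub]
  obtain a where a: "a \<in> A" using assms(1) by blast
  have one: "1 \<in> ?S" using family_sum_mem[of a A 1 E, OF a subringD(2)[OF sub[OF a]]] .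
  have "?S \<subseteq> {u. - u \<in> ?S}"
  proof (rule family_sum_induct)
    show "0 \<in> {u. - u \<in> ?S}" by (simp add: family_sum_zero)
    show "u + v \<in> {u. - u \<in> ?S}" if "u \<in> {u. - u \<in> ?S}" "v \<in> {u. - u \<in> ?S}" for u v
      using family_sum_add[of "- u" A E "- v", OF _ _ summand_zero summand_add] that by simp
    show "E a \<subseteq> {u. - u \<in> ?S}" if "a \<in> A" for a
      using subringD(5)[OF sub[OF that]] family_sum_mem[OF that] by blast
  qed
  then have neg: "- u \<in> ?S" if "u \<in> ?S" for u using that by blast
  have add: "u + v \<in> ?S" if "u \<in> ?S" "v \<in> ?S" for u v
    using family_sum_add[OF that summand_zero summand_add] .
  have mult: "u * v \<in> ?S" if "u \<in> ?S" "v \<in> ?S" for u v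
    using family_sum_mult[OF summand_zero summand_add cross that] .
  show ?thesis unfolding subring_def
    using one add mult neg by (simp add: family_sum_zero)
qed

lemma extension_ideal:
  assumes E: "subring E" and "I \<subseteq> E"
  shows "is_ideal E (fset_mult I E)"
proof -
  let ?J = "fset_mult I E"
  have "?J \<subseteq> E"
    by (rule fset_mult_induct) (use assms subringD[OF E] in auto)
  moreover have "?J \<subseteq> {u. \<forall>s\<in>E. s * u \<in> ?J}"
  proof (rule fset_mult_induct)
    show "0 \<in> {u. \<forall>s\<in>E. s * u \<in> ?J}" by (simp add: fset_mult_zero)
    show "u + v \<in> {u. \<forall>s\<in>E. s * u \<in> ?J}"
      if "u \<in> {u. \<forall>s\<in>E. s * u \<in> ?J}" "v \<in> {u. \<forall>s\<in>E. s * u \<in> ?J}" for u v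
      using that by (simp add: distrib_left fset_mult_add)
    show "i * e \<in> {u. \<forall>s\<in>E. s * u \<in> ?J}" if "i \<in> I" "e \<in> E" for i e
      using fset_mult_prod[OF that(1) subringD(4)[OF E _ that(2)]] by (simp add: mult.left_commute)
  qed
  ultimately show ?thesis unfolding is_ideal_def by (auto simp: fset_mult_zero fset_mult_add)
qed

lemma subset_extension: "1 \<in> E \<Longrightarrow> I \<subseteq> fset_mult I E"
  using fset_mult_prod[of _ I 1 E] by auto

lemma extension_comaximal:
  assumes R: "subring R" and E: "subring E" and "R \<subseteq> E"
    and I: "is_ideal R I" and J: "is_ideal R J" and "comaximal R I J"
  shows "comaximal E (fset_mult I E) (fset_mult J E)"
proof -
  obtain p q where pq: "p \<in> I" "q \<in> J" "p + q = 1"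
    using comaximal_one[OF assms(6) subringD(2)[OF R]] .
  have "I \<subseteq> E" "J \<subseteq> E" using is_idealD(1)[OF I] is_idealD(1)[OF J] \<open>R \<subseteq> E\<close> by blast+
  then have IE: "fset_mult I E \<subseteq> E" and JE: "fset_mult J E \<subseteq> E"
    using is_idealD(1)[OF extension_ideal[OF E]] by blast+
  have "E \<subseteq> {a + b |a b. a \<in> fset_mult I E \<and> b \<in> fset_mult J E}"
  proof
    fix e assume "e \<in> E"
    have "e = (p + q) * e" by (simp add: pq(3))
    then have "e = p * e + q * e" by (simp add: distrib_right)
    then show "e \<in> {a + b |a b. a \<in> fset_mult I E \<and> b \<in> fset_mult J E}"
      using fset_mult_prod[OF pq(1) \<open>e \<in> E\<close>] fset_mult_prod[OF pq(2) \<open>e \<in> E\<close>] by blast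
  qed
  moreover have "{a + b |a b. a \<in> fset_mult I E \<and> b \<in> fset_mult J E} \<subseteq> E"
    using subringD(3)[OF E] IE JE by blast
  ultimately show ?thesis unfolding comaximal_def by (rule subset_antisym[rotated])
qed

lemma colon_extension:
  assumes E: "subring E" and "D \<subseteq> E" and y: "y \<in> colon D I" and e: "e \<in> E"
  shows "y * e \<in> colon E (fset_mult I E)"
proof -
  have "fset_mult I E \<subseteq> {j. y * e * j \<in> E}"
  proof (rule fset_mult_induct)
    show "0 \<in> {j. y * e * j \<in> E}" using subringD(1)[OF E] by simp
    show "u + v \<in> {j. y * e * j \<in> E}" if "u \<in> {j. y * e * j \<in> E}" "v \<in> {j. y * e * j \<in> E}" for u v
      using that subringD(3)[OF E] by (simp add: distrib_left)
    show "i * f \<in> {j. y * e * j \<in> E}" if "i \<in> I" "f \<in> E" for i f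
    proof -
      have "y * i \<in> E" using y that(1) \<open>D \<subseteq> E\<close> unfolding colon_def by blast
      then have "(y * i) * (e * f) \<in> E" using subringD(4)[OF E] e that(2) by blast
      then show ?thesis by (simp add: algebra_simps)
    qed
  qed
  then show ?thesis unfolding colon_def by (auto simp: mult.commute)
qed

text \<open>Extension along a ring inclusion D \<subseteq> E preserves invertibility of ideals: from
  \<Sum> i_k y_k = 1 with y_k \<in> (D : I) every e \<in> E is \<Sum> i_k (y_k e) \<in> (I E)(E : I E).\<close>
lemma extension_invertible:
  assumes D: "subring D" and E: "subring E" and "D \<subseteq> E" and inv: "invertible_ideal D I"
  shows "invertible_ideal E (fset_mult I E)"
proof -
  let ?J = "fset_mult I E"
  have "I \<subseteq> E" using inv is_idealD(1) \<open>D \<subseteq> E\<close> unfolding invertible_ideal_def by blast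
  then have J: "is_ideal E ?J" using extension_ideal[OF E] by blast
  have "fset_mult ?J (colon E ?J) \<subseteq> E"
    by (rule fset_mult_induct) (use subringD(1,3)[OF E] in \<open>auto simp: colon_def mult.commute\<close>)
  moreover have "fset_mult I (colon D I) \<subseteq> {z. \<forall>e\<in>E. z * e \<in> fset_mult ?J (colon E ?J)}"
  proof (rule fset_mult_induct)
    show "0 \<in> {z. \<forall>e\<in>E. z * e \<in> fset_mult ?J (colon E ?J)}" by (simp add: fset_mult_zero)
    show "u + v \<in> {z. \<forall>e\<in>E. z * e \<in> fset_mult ?J (colon E ?J)}"
      if "u \<in> {z. \<forall>e\<in>E. z * e \<in> fset_mult ?J (colon E ?J)}"
        "v \<in> {z. \<forall>e\<in>E. z * e \<in> fset_mult ?J (colon E ?J)}" for u v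
      using that by (simp add: distrib_right fset_mult_add)
    show "i * y \<in> {z. \<forall>e\<in>E. z * e \<in> fset_mult ?J (colon E ?J)}" if "i \<in> I" "y \<in> colon D I" for i y
    proof (intro CollectI ballI)
      fix e assume "e \<in> E"
      have "i \<in> ?J" using subset_extension[OF subringD(2)[OF E]] that(1) by blast
      then have "i * (y * e) \<in> fset_mult ?J (colon E ?J)"
        using fset_mult_prod colon_extension[OF E \<open>D \<subseteq> E\<close> that(2) \<open>e \<in> E\<close>] by blast
      then show "i * y * e \<in> fset_mult ?J (colon E ?J)" by (simp add: mult.assoc)
    qed
  qed
  then have "E \<subseteq> fset_mult ?J (colon E ?J)"
    using inv subringD(2)[OF D] unfolding invertible_ideal_def by force
  ultimately show ?thesis unfolding invertible_ideal_def using J by blast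
qed

definition clearable :: "'k::field set \<Rightarrow> 'k set \<Rightarrow> 'k set \<Rightarrow> 'k set" where
  "clearable R I S = {y. \<exists>c\<in>R. c - 1 \<in> I \<and> c * y \<in> S}"

lemma clearable_of_mem:
  assumes "subring R" "is_ideal R I" "y \<in> S"
  shows "y \<in> clearable R I S"
  unfolding clearable_def
  using subringD(2)[OF assms(1)] is_idealD(2)[OF assms(2)] assms(3) by force

lemma unit_mod_ideal_mult:
  assumes I: "is_ideal R I" and "c \<in> R" "c - 1 \<in> I" "d - 1 \<in> I"
  shows "c * d - 1 \<in> I"
proof -
  have "c * d - 1 = c * (d - 1) + (c - 1)" by (simp add: algebra_simps)
  also have "\<dots> \<in> I" using is_idealD(3,4)[OF I] assms(2-4) by blast
  finally show ?thesis .
qed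

lemma clearable_add:
  assumes R: "subring R" and I: "is_ideal R I"
    and S_add: "\<And>a b. a \<in> S \<Longrightarrow> b \<in> S \<Longrightarrow> a + b \<in> S"
    and S_smult: "\<And>r a. r \<in> R \<Longrightarrow> a \<in> S \<Longrightarrow> r * a \<in> S"
    and u: "u \<in> clearable R I S" and v: "v \<in> clearable R I S"
  shows "u + v \<in> clearable R I S"
proof -
  obtain c where c: "c \<in> R" "c - 1 \<in> I" "c * u \<in> S" using u unfolding clearable_def by blast
  obtain d where d: "d \<in> R" "d - 1 \<in> I" "d * v \<in> S" using v unfolding clearable_def by blast
  have "c * d * (u + v) = d * (c * u) + c * (d * v)" by (simp add: algebra_simps)
  also have "\<dots> \<in> S" using S_add S_smult c d by blast
  finally show ?thesis
    unfolding clearable_def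
    using subringD(4)[OF R c(1) d(1)] unit_mod_ideal_mult[OF I c(1,2) d(2)] by blast
qed

text \<open>If 1 can be moved into I by some c \<equiv> 1 mod I, then 1 = c - (c - 1) \<in> I.\<close>
lemma clearable_one:
  assumes R: "subring R" and I: "is_ideal R I" and "1 \<in> clearable R I I"
  shows "I = R"
proof -
  obtain c where "c - 1 \<in> I" "c \<in> I" using assms(3) unfolding clearable_def by auto
  then have "c + - (c - 1) \<in> I" using is_idealD(3)[OF I] ideal_neg[OF R I] by blast
  then show ?thesis using ideal_one_eq[OF I] by simp
qed

locale comaximal_family =
  fixes R :: "'k::field set" and A :: "'a set" and I :: "'a \<Rightarrow> 'k set"
  assumes subring_R: "subring R"
    and nonempty: "A \<noteq> {}"
    and ideal: "\<alpha> \<in> A \<Longrightarrow> is_ideal R (I \<alpha>)"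
    and pairwise_comaximal: "\<alpha> \<in> A \<Longrightarrow> \<beta> \<in> A \<Longrightarrow> \<alpha> \<noteq> \<beta> \<Longrightarrow> comaximal R (I \<alpha>) (I \<beta>)"
begin

abbreviation E :: "'k set" where
  "E \<equiv> family_sum A (\<lambda>\<alpha>. colon (I \<alpha>) (I \<alpha>))"

lemma multipliers_subring: "\<alpha> \<in> A \<Longrightarrow> subring (colon (I \<alpha>) (I \<alpha>))"
  using colon_self_subring[OF subring_R ideal] .

lemma multipliers_subset_E: "\<alpha> \<in> A \<Longrightarrow> colon (I \<alpha>) (I \<alpha>) \<subseteq> E"
  using family_sum_mem[of \<alpha> A _ "\<lambda>\<alpha>. colon (I \<alpha>) (I \<alpha>)"] by blast

lemma R_subset_E: "R \<subseteq> E"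
proof -
  obtain \<alpha> where "\<alpha> \<in> A" using nonempty by blast
  then show ?thesis using ideal_subset_colon_self[OF ideal] multipliers_subset_E by blast
qed

lemma subring_E: "subring E"
proof (rule family_sum_subring[OF nonempty multipliers_subring])
  fix \<alpha> \<beta> e f
  assume \<alpha>: "\<alpha> \<in> A" and \<beta>: "\<beta> \<in> A" and e: "e \<in> colon (I \<alpha>) (I \<alpha>)" and f: "f \<in> colon (I \<beta>) (I \<beta>)"
  show "e * f \<in> E"
  proof (cases "\<alpha> = \<beta>")
    case True
    then show ?thesis using subringD(4)[OF multipliers_subring[OF \<alpha>] e] f multipliers_subset_E[OF \<alpha>] by blast
  next
    case False
    then obtain u v where u: "u \<in> colon (I \<alpha>) (I \<alpha>)" and v: "v \<in> colon (I \<beta>) (I \<beta>)"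
      and uv: "e * f = u + v"
      using colon_product_split[OF subring_R ideal[OF \<alpha>] ideal[OF \<beta>] pairwise_comaximal[OF \<alpha> \<beta>] e f]
      by blast
    have "u \<in> E" "v \<in> E" using multipliers_subset_E \<alpha> \<beta> u v by blast+
    then show ?thesis unfolding uv
      by (rule family_sum_add) (use subringD(1,3)[OF multipliers_subring] in auto)
  qed
qed

lemma fractional_overring_E:
  assumes "x \<in> R" "x \<noteq> 0" and x: "\<And>\<alpha>. \<alpha> \<in> A \<Longrightarrow> x \<in> I \<alpha>"
  shows "fractional_overring R E"
proof -
  have "E \<subseteq> {y. x * y \<in> R}"
  proof (rule family_sum_induct)
    show "0 \<in> {y. x * y \<in> R}" using subringD(1)[OF subring_R] by simp
    show "u + v \<in> {y. x * y \<in> R}" if "u \<in> {y. x * y \<in> R}" "v \<in> {y. x * y \<in> R}" for u v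
      using that subringD(3)[OF subring_R] by (simp add: distrib_left)
    show "colon (I \<alpha>) (I \<alpha>) \<subseteq> {y. x * y \<in> R}" if "\<alpha> \<in> A" for \<alpha>
      using x[OF that] is_idealD(1)[OF ideal[OF that]] unfolding colon_def by (auto simp: mult.commute)
  qed
  then show ?thesis
    unfolding fractional_overring_def overring_def using assms subring_E R_subset_E by blast
qed

lemma extensions_comaximal:
  "\<alpha> \<in> A \<Longrightarrow> \<beta> \<in> A \<Longrightarrow> \<alpha> \<noteq> \<beta> \<Longrightarrow> comaximal E (fset_mult (I \<alpha>) E) (fset_mult (I \<beta>) E)"
  using extension_comaximal[OF subring_R subring_E R_subset_E ideal ideal pairwise_comaximal] .

lemma extension_is_ideal: "\<alpha> \<in> A \<Longrightarrow> is_ideal E (fset_mult (I \<alpha>) E)"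
  using extension_ideal[OF subring_E] is_idealD(1)[OF ideal] R_subset_E by blast

lemma extension_invertible_of_stable:
  assumes \<alpha>: "\<alpha> \<in> A" and "stable_ideal R (I \<alpha>)"
  shows "invertible_ideal E (fset_mult (I \<alpha>) E)"
proof -
  have "invertible_ideal (colon (I \<alpha>) (I \<alpha>)) (I \<alpha>)" using assms(2) unfolding stable_ideal_def by blast
  then show ?thesis
    by (rule extension_invertible[OF multipliers_subring[OF \<alpha>] subring_E multipliers_subset_E[OF \<alpha>]])
qed

text \<open>Step (3): a summand (I \<beta> : I \<beta>) with \<beta> \<noteq> \<alpha> is moved into (I \<alpha> : I \<alpha>) by the
  multiplier q of a splitting p + q = 1, p \<in> I \<alpha>, q \<in> I \<beta>, since q (I \<beta> : I \<beta>) \<subseteq> I \<beta> \<subseteq> R.\<close>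
lemma multipliers_clearable:
  assumes \<alpha>: "\<alpha> \<in> A" and \<beta>: "\<beta> \<in> A"
  shows "colon (I \<beta>) (I \<beta>) \<subseteq> clearable R (I \<alpha>) (colon (I \<alpha>) (I \<alpha>))"
proof (cases "\<beta> = \<alpha>")
  case True
  then show ?thesis using clearable_of_mem[OF subring_R ideal[OF \<alpha>]] by blast
next
  case False
  obtain p q where pq: "p \<in> I \<alpha>" "q \<in> I \<beta>" "p + q = 1"
    using comaximal_one[OF pairwise_comaximal[OF \<alpha> \<beta>] subringD(2)[OF subring_R]] False by metis
  have "q - 1 = - p" using pq(3) by (simp add: algebra_simps)
  then have q1: "q - 1 \<in> I \<alpha>" using ideal_neg[OF subring_R ideal[OF \<alpha>] pq(1)] by simp
  have qR: "q \<in> R" using pq(2) is_idealD(1)[OF ideal[OF \<beta>]] by blast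
  show ?thesis
  proof
    fix e assume "e \<in> colon (I \<beta>) (I \<beta>)"
    then have "e * q \<in> I \<beta>" using pq(2) unfolding colon_def by blast
    then have "q * e \<in> colon (I \<alpha>) (I \<alpha>)"
      using is_idealD(1)[OF ideal[OF \<beta>]] ideal_subset_colon_self[OF ideal[OF \<alpha>]]
      by (auto simp: mult.commute)
    then show "e \<in> clearable R (I \<alpha>) (colon (I \<alpha>) (I \<alpha>))"
      unfolding clearable_def using qR q1 by blast
  qed
qed

lemma E_clearable:
  assumes \<alpha>: "\<alpha> \<in> A"
  shows "E \<subseteq> clearable R (I \<alpha>) (colon (I \<alpha>) (I \<alpha>))"
proof (rule family_sum_induct)
  note Ea = subringD[OF multipliers_subring[OF \<alpha>]]
  show "0 \<in> clearable R (I \<alpha>) (colon (I \<alpha>) (I \<alpha>))"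
    using clearable_of_mem[OF subring_R ideal[OF \<alpha>] Ea(1)] .
  show "u + v \<in> clearable R (I \<alpha>) (colon (I \<alpha>) (I \<alpha>))"
    if "u \<in> clearable R (I \<alpha>) (colon (I \<alpha>) (I \<alpha>))" "v \<in> clearable R (I \<alpha>) (colon (I \<alpha>) (I \<alpha>))"
    for u v
    using clearable_add[OF subring_R ideal[OF \<alpha>] Ea(3) _ that] Ea(4)
      ideal_subset_colon_self[OF ideal[OF \<alpha>]] by blast
  show "colon (I \<beta>) (I \<beta>) \<subseteq> clearable R (I \<alpha>) (colon (I \<alpha>) (I \<alpha>))" if "\<beta> \<in> A" for \<beta>
    using multipliers_clearable[OF \<alpha> that] .
qed

lemma extension_clearable:
  assumes \<alpha>: "\<alpha> \<in> A"
  shows "fset_mult (I \<alpha>) E \<subseteq> clearable R (I \<alpha>) (I \<alpha>)"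
proof (rule fset_mult_induct)
  note Ia = is_idealD[OF ideal[OF \<alpha>]]
  show "0 \<in> clearable R (I \<alpha>) (I \<alpha>)" using clearable_of_mem[OF subring_R ideal[OF \<alpha>] Ia(2)] .
  show "u + v \<in> clearable R (I \<alpha>) (I \<alpha>)"
    if "u \<in> clearable R (I \<alpha>) (I \<alpha>)" "v \<in> clearable R (I \<alpha>) (I \<alpha>)" for u v
    using clearable_add[OF subring_R ideal[OF \<alpha>] Ia(3) Ia(4) that] .
  show "i * e \<in> clearable R (I \<alpha>) (I \<alpha>)" if i: "i \<in> I \<alpha>" and e: "e \<in> E" for i e
  proof -
    obtain c where c: "c \<in> R" "c - 1 \<in> I \<alpha>" "c * e \<in> colon (I \<alpha>) (I \<alpha>)"
      using E_clearable[OF \<alpha>] e unfolding clearable_def by blast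
    have "(c * e) * i \<in> I \<alpha>" using c(3) i unfolding colon_def by blast
    then show ?thesis unfolding clearable_def using c(1,2) by (auto simp: algebra_simps)
  qed
qed

lemma extension_proper:
  assumes \<alpha>: "\<alpha> \<in> A" and "I \<alpha> \<noteq> R"
  shows "fset_mult (I \<alpha>) E \<noteq> E"
proof
  assume "fset_mult (I \<alpha>) E = E"
  then have "1 \<in> clearable R (I \<alpha>) (I \<alpha>)"
    using extension_clearable[OF \<alpha>] subringD(2)[OF subring_E] by blast
  then show False using clearable_one[OF subring_R ideal[OF \<alpha>]] assms(2) by blast
qed

text \<open>Distinct indices give distinct extensions: two equal comaximal ideals are the whole ring.\<close>
lemma extensions_inj:
  assumes proper: "\<And>\<alpha>. \<alpha> \<in> A \<Longrightarrow> I \<alpha> \<noteq> R"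
  shows "inj_on (\<lambda>\<alpha>. fset_mult (I \<alpha>) E) A"
proof (rule inj_onI, rule ccontr)
  fix \<alpha> \<beta> assume \<alpha>: "\<alpha> \<in> A" and \<beta>: "\<beta> \<in> A"
    and eq: "fset_mult (I \<alpha>) E = fset_mult (I \<beta>) E" and "\<alpha> \<noteq> \<beta>"
  have "comaximal E (fset_mult (I \<alpha>) E) (fset_mult (I \<alpha>) E)"
    using extensions_comaximal[OF \<alpha> \<beta> \<open>\<alpha> \<noteq> \<beta>\<close>] unfolding eq .
  then have "fset_mult (I \<alpha>) E = E" by (rule comaximal_self[OF extension_is_ideal[OF \<alpha>]])
  with extension_proper[OF \<alpha> proper[OF \<alpha>]] show False ..
qed

end

theorem mainTheorem5:
  fixes R :: "'k::field set" and x :: 'k and A :: "'a set" and I :: "'a \<Rightarrow> 'k set"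
  assumes "has_quotient_field R" and "R \<noteq> UNIV"
    and "finitely_stable R" and "\<not> finite_character R"
    and "x \<in> R" and "x \<noteq> 0"
    and "infinite A"
    and "\<And>\<alpha>. \<alpha> \<in> A \<Longrightarrow> is_ideal R (I \<alpha>) \<and> fin_gen R (I \<alpha>) \<and> I \<alpha> \<noteq> R \<and> x \<in> I \<alpha>"
    and "\<And>\<alpha> \<beta>. \<alpha> \<in> A \<Longrightarrow> \<beta> \<in> A \<Longrightarrow> \<alpha> \<noteq> \<beta> \<Longrightarrow> comaximal R (I \<alpha>) (I \<beta>)"
  shows "fractional_overring R (family_sum A (\<lambda>\<alpha>. colon (I \<alpha>) (I \<alpha>)))
    \<and> infinite ((\<lambda>\<alpha>. fset_mult (I \<alpha>) (family_sum A (\<lambda>\<alpha>. colon (I \<alpha>) (I \<alpha>)))) ` A)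
    \<and> (\<forall>\<alpha>\<in>A. \<forall>\<beta>\<in>A. \<alpha> \<noteq> \<beta> \<longrightarrow>
          comaximal (family_sum A (\<lambda>\<alpha>. colon (I \<alpha>) (I \<alpha>)))
            (fset_mult (I \<alpha>) (family_sum A (\<lambda>\<alpha>. colon (I \<alpha>) (I \<alpha>))))
            (fset_mult (I \<beta>) (family_sum A (\<lambda>\<alpha>. colon (I \<alpha>) (I \<alpha>)))))
    \<and> (\<forall>\<alpha>\<in>A. invertible_ideal (family_sum A (\<lambda>\<alpha>. colon (I \<alpha>) (I \<alpha>)))
            (fset_mult (I \<alpha>) (family_sum A (\<lambda>\<alpha>. colon (I \<alpha>) (I \<alpha>))))
          \<and> fset_mult (I \<alpha>) (family_sum A (\<lambda>\<alpha>. colon (I \<alpha>) (I \<alpha>)))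
              \<noteq> family_sum A (\<lambda>\<alpha>. colon (I \<alpha>) (I \<alpha>))
          \<and> x \<in> fset_mult (I \<alpha>) (family_sum A (\<lambda>\<alpha>. colon (I \<alpha>) (I \<alpha>))))"
proof -
  text \<open>The hypotheses R \<noteq> K and lack of finite character only guarantee that such families
    exist; the argument itself needs just the comaximal family and finite stability.\<close>
  have "subring R" using assms(1) unfolding has_quotient_field_def by blast
  then interpret comaximal_family R A I
    using assms(7-9) by unfold_locales auto
  have proper: "I \<alpha> \<noteq> R" and x: "x \<in> I \<alpha>" if "\<alpha> \<in> A" for \<alpha>
    using assms(8)[OF that] by blast+
  have "invertible_ideal E (fset_mult (I \<alpha>) E)" if "\<alpha> \<in> A" for \<alpha>
  proof (rule extension_invertible_of_stable[OF that])
    have "I \<alpha> \<noteq> {0}" using x[OF that] assms(6) by blast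
    then show "stable_ideal R (I \<alpha>)"
      using assms(3) assms(8)[OF that] unfolding finitely_stable_def by blast
  qed
  moreover have "x \<in> fset_mult (I \<alpha>) E" if "\<alpha> \<in> A" for \<alpha>
    using subset_extension[OF subringD(2)[OF subring_E]] x[OF that] by blast
  moreover have "infinite ((\<lambda>\<alpha>. fset_mult (I \<alpha>) E) ` A)"
    using extensions_inj[OF proper] assms(7) finite_imageD by blast
  ultimately show ?thesis
    using fractional_overring_E[OF assms(5,6) x] extensions_comaximal extension_proper[OF _ proper]
    by (intro conjI ballI impI) auto
qed

end
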